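(* Let $p$ be prime, $f:\mathrm{GF}(p)^n\to\mathrm{GF}(p)$ a polynomial function, and $t=x_{i_1}^{m_1}\cdots x_{i_k}^{m_k}$ with distinct indices and $1\le m_\ell\le p-1$. Write $f=t\,f_{S(t)}+r$ where no monomial of $r$ is divisible by $t$. Then $\deg(f_t)\le\deg(f_{S(t)})$. In particular, if $\deg(t)=\deg(f)-1$, then $f_t$ has total degree at most one (it is linear or constant).
   Context: Polynomial functions over $\mathrm{GF}(p)$ are represented by their unique polynomial of degree at most $p-1$ in each variable; $\deg$ is total degree, and $f_{S(t)}, r$ are uniquely determined by this representative. $f_t=\Delta^{(m_1)}_{\mathbf{e}_{i_1},\ldots,\mathbf{e}_{i_1}}\cdots\Delta^{(m_k)}_{\mathbf{e}_{i_k},\ldots,\mathbf{e}_{i_k}} f$ (difference $m_\ell$ times w.r.t. $x_{i_\ell}$ with step $1$), where $(\Delta_{\mathbf{a}} f)(\mathbf{x}) = f(\mathbf{x}+\mathbf{a})-f(\mathbf{x})$. *)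

theory Defs
  imports "Berlekamp_Zassenhaus.Finite_Field"
begin

text \<open>Points of GF(p)^n are functions 'n => 'p mod_ring (with 'n a finite index type
  of n variables and p = CARD('p) prime). Exponent vectors are 'n => nat.\<close>

definition reduced_exps :: "nat \<Rightarrow> ('n::finite \<Rightarrow> nat) set" where
  "reduced_exps p = {e. \<forall>i. e i < p}"

definition monom_eval :: "('n::finite \<Rightarrow> nat) \<Rightarrow> ('n \<Rightarrow> 'a::comm_ring_1) \<Rightarrow> 'a" where
  "monom_eval e x = (\<Prod>i\<in>UNIV. x i ^ e i)"

definition peval :: "(('n::finite \<Rightarrow> nat) \<Rightarrow> 'p::prime_card mod_ring) \<Rightarrow> ('n \<Rightarrow> 'p mod_ring) \<Rightarrow> 'p mod_ring" where
  "peval c x = (\<Sum>e\<in>reduced_exps CARD('p). c e * monom_eval e x)"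

definition coeffs :: "(('n::finite \<Rightarrow> 'p::prime_card mod_ring) \<Rightarrow> 'p mod_ring) \<Rightarrow> ('n \<Rightarrow> nat) \<Rightarrow> 'p mod_ring" where
  "coeffs f = (THE c. (\<forall>e. e \<notin> reduced_exps CARD('p) \<longrightarrow> c e = 0) \<and> (\<forall>x. f x = peval c x))"

text \<open>Total degree of the representative; the zero polynomial gets degree -1 (standing in for -infinity).\<close>
definition pdeg :: "(('n::finite \<Rightarrow> 'p::prime_card mod_ring) \<Rightarrow> 'p mod_ring) \<Rightarrow> int" where
  "pdeg f = (if (\<forall>e. coeffs f e = 0) then -1
             else int (Max {sum e UNIV | e. coeffs f e \<noteq> 0}))"

definition delta :: "'n \<Rightarrow> (('n \<Rightarrow> 'a::ring_1) \<Rightarrow> 'a) \<Rightarrow> ('n \<Rightarrow> 'a) \<Rightarrow> 'a" where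
  "delta i f x = f (x(i := x i + 1)) - f x"

text \<open>f_t for t = x_{i_1}^{m_1} ... x_{i_k}^{m_k}, given as index list is and exponent list ms.\<close>
definition ft :: "'n list \<Rightarrow> nat list \<Rightarrow> (('n \<Rightarrow> 'a::ring_1) \<Rightarrow> 'a) \<Rightarrow> (('n \<Rightarrow> 'a) \<Rightarrow> 'a)" where
  "ft is ms f = foldr (\<lambda>(i, m) g. (delta i ^^ m) g) (zip is ms) f"

definition texp :: "'n list \<Rightarrow> nat list \<Rightarrow> 'n \<Rightarrow> nat" where
  "texp is ms j = (\<Sum>l<length is. if is ! l = j then ms ! l else 0)"

text \<open>f_{S(t)}: the quotient by t of the part of the representative of f consisting of
  monomials divisible by t, so that f = t * f_{S(t)} + r.\<close>
definition fS :: "'n list \<Rightarrow> nat list \<Rightarrow> (('n::finite \<Rightarrow> 'p::prime_card mod_ring) \<Rightarrow> 'p mod_ring)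
    \<Rightarrow> ('n \<Rightarrow> 'p mod_ring) \<Rightarrow> 'p mod_ring" where
  "fS is ms f x = (\<Sum>e\<in>reduced_exps CARD('p).
      if (\<forall>j. texp is ms j \<le> e j) then coeffs f e * monom_eval (\<lambda>j. e j - texp is ms j) x else 0)"

end

theory Submission
  imports Defs "HOL-Library.Cardinality"
begin

text \<open>Every function on GF(p)^n is a polynomial with reduced exponents (interpolate with the
  point indicators \<open>\<Prod>j. 1 - (x j - a j)^(p-1)\<close>), and counting shows that this
  representation is unique. A difference in the variable \<open>x i\<close> turns a monomial \<open>x^e\<close> into
  a combination of monomials \<open>x^e'\<close> with \<open>e' i < e i\<close> and \<open>e' \<le> e\<close> elsewhere. Hence every
  monomial \<open>x^e\<close> of \<open>f_t\<close> satisfies \<open>e + t \<le> d\<close> for some monomial \<open>x^d\<close> of \<open>f\<close>; then \<open>x^(d-t)\<close>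
  is a monomial of \<open>f_S(t)\<close> of degree at least \<open>deg e\<close>, and \<open>deg e \<le> deg f - deg t\<close>.\<close>

lemma reduced_exps_eq_PiE: "reduced_exps n = (PiE UNIV (\<lambda>_. {..<n}) :: ('n::finite \<Rightarrow> nat) set)"
  by (auto simp: reduced_exps_def PiE_def extensional_def)

lemma finite_reduced_exps: "finite (reduced_exps n :: ('n::finite \<Rightarrow> nat) set)"
  unfolding reduced_exps_eq_PiE by (intro finite_PiE) auto

lemma card_reduced_exps: "card (reduced_exps n :: ('n::finite \<Rightarrow> nat) set) = n ^ CARD('n)"
  unfolding reduced_exps_eq_PiE by (subst card_PiE) auto

lemma peval_add: "peval (\<lambda>e. c e + d e) x = peval c x + peval d x"
  unfolding peval_def by (simp add: sum.distrib distrib_right)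

lemma peval_cmult: "peval (\<lambda>e. a * c e) x = a * peval c x"
  unfolding peval_def by (simp add: sum_distrib_left mult.assoc)

lemma peval_indicator:
  fixes x :: "'n::finite \<Rightarrow> 'p::prime_card mod_ring"
  assumes "e \<in> reduced_exps CARD('p)"
  shows "peval (\<lambda>d. if d = e then 1 else 0) x = monom_eval e x"
proof -
  have eq: "(\<lambda>d. (if d = e then 1 else 0) * monom_eval d x) = (\<lambda>d. if d = e then monom_eval e x else 0)"
    by auto
  show ?thesis
    unfolding peval_def eq using assms by (simp add: finite_reduced_exps)
qed


definition poly_supported ::
    "('n::finite \<Rightarrow> nat) set \<Rightarrow> (('n \<Rightarrow> 'p::prime_card mod_ring) \<Rightarrow> 'p mod_ring) \<Rightarrow> bool" where
  "poly_supported B g \<longleftrightarrow>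
     (\<exists>c. (\<forall>e. c e \<noteq> 0 \<longrightarrow> e \<in> B \<inter> reduced_exps CARD('p)) \<and> g = peval c)"

lemma poly_supported_0: "poly_supported B (\<lambda>x. 0)"
  unfolding poly_supported_def by (intro exI[of _ "\<lambda>e. 0"]) (simp add: peval_def fun_eq_iff)

lemma poly_supported_add:
  fixes g h :: "('n::finite \<Rightarrow> 'p::prime_card mod_ring) \<Rightarrow> 'p mod_ring"
  assumes "poly_supported B g" "poly_supported B h"
  shows "poly_supported B (\<lambda>x. g x + h x)"
proof -
  from assms obtain c d
    where c: "\<forall>e. c e \<noteq> 0 \<longrightarrow> e \<in> B \<inter> reduced_exps CARD('p)" "g = peval c"
      and d: "\<forall>e. d e \<noteq> 0 \<longrightarrow> e \<in> B \<inter> reduced_exps CARD('p)" "h = peval d"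
    unfolding poly_supported_def by blast
  have "\<forall>e. c e + d e \<noteq> 0 \<longrightarrow> e \<in> B \<inter> reduced_exps CARD('p)"
    using c(1) d(1) by (metis add.right_neutral)
  with c(2) d(2) show ?thesis
    unfolding poly_supported_def by (intro exI[of _ "\<lambda>e. c e + d e"]) (auto simp: peval_add)
qed

lemma poly_supported_cmult:
  fixes g :: "('n::finite \<Rightarrow> 'p::prime_card mod_ring) \<Rightarrow> 'p mod_ring"
  assumes "poly_supported B g"
  shows "poly_supported B (\<lambda>x. a * g x)"
proof -
  from assms obtain c where "\<forall>e. c e \<noteq> 0 \<longrightarrow> e \<in> B \<inter> reduced_exps CARD('p)" "g = peval c"
    unfolding poly_supported_def by blast
  then show ?thesis
    unfolding poly_supported_def by (intro exI[of _ "\<lambda>e. a * c e"]) (auto simp: peval_cmult)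
qed

lemma poly_supported_sum:
  "finite K \<Longrightarrow> (\<And>k. k \<in> K \<Longrightarrow> poly_supported B (g k)) \<Longrightarrow>
    poly_supported B (\<lambda>x. \<Sum>k\<in>K. g k x)"
  by (induction K rule: finite_induct) (simp_all add: poly_supported_0 poly_supported_add)

lemma poly_supported_monom_eval:
  "e \<in> B \<Longrightarrow> e \<in> reduced_exps CARD('p) \<Longrightarrow>
    poly_supported B (monom_eval e :: ('n::finite \<Rightarrow> 'p::prime_card mod_ring) \<Rightarrow> _)"
  unfolding poly_supported_def
  by (intro exI[of _ "\<lambda>d. if d = e then 1 else 0"] conjI ext) (auto simp: peval_indicator)


section \<open>Differences lower the exponents\<close>

lemma delta_monom_eval:
  fixes x :: "'n::finite \<Rightarrow> 'a::comm_ring_1"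
  shows "delta i (monom_eval e) x = (\<Sum>k<e i. of_nat (e i choose k) * monom_eval (e(i := k)) x)"
proof -
  define rest where "rest = (\<Prod>j\<in>UNIV-{i}. x j ^ e j)"
  have split: "monom_eval d y = y i ^ d i * (\<Prod>j\<in>UNIV-{i}. y j ^ d j)" for d and y :: "'n \<Rightarrow> 'a"
    unfolding monom_eval_def by (subst prod.remove[of _ i]) auto
  have rest_shift: "(\<Prod>j\<in>UNIV-{i}. (x(i := x i + 1)) j ^ e j) = rest"
    and rest_upd: "(\<Prod>j\<in>UNIV-{i}. x j ^ (e(i := k)) j) = rest" for k
    unfolding rest_def by (auto intro: prod.cong)
  have binomial: "(x i + 1) ^ e i - x i ^ e i = (\<Sum>k<e i. of_nat (e i choose k) * x i ^ k)"
    by (simp add: binomial_ring lessThan_Suc_atMost[symmetric])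
  have "delta i (monom_eval e) x = ((x i + 1) ^ e i - x i ^ e i) * rest"
    unfolding delta_def split rest_shift by (simp add: rest_def[symmetric] left_diff_distrib)
  also have "\<dots> = (\<Sum>k<e i. of_nat (e i choose k) * x i ^ k * rest)"
    unfolding binomial by (simp add: sum_distrib_right)
  finally show ?thesis
    unfolding split rest_upd by (simp add: mult.assoc)
qed

definition dominated_by :: "('n \<Rightarrow> nat) set \<Rightarrow> ('n \<Rightarrow> nat) \<Rightarrow> ('n \<Rightarrow> nat) set" where
  "dominated_by B s = {e. \<exists>d\<in>B. \<forall>j. e j + s j \<le> d j}"

lemma fun_upd_in_dominated_by:
  assumes "e \<in> dominated_by B s" "k < e i"
  shows "e(i := k) \<in> dominated_by B (s(i := Suc (s i)))"
proof -
  from assms(1) obtain d where d: "d \<in> B" "\<forall>j. e j + s j \<le> d j"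
    unfolding dominated_by_def by blast
  have "(e(i := k)) j + (s(i := Suc (s i))) j \<le> d j" for j
    using assms(2) d(2)[rule_format, of j] by (cases "j = i") auto
  with d(1) show ?thesis
    unfolding dominated_by_def by blast
qed

lemma poly_supported_delta:
  fixes g :: "('n::finite \<Rightarrow> 'p::prime_card mod_ring) \<Rightarrow> 'p mod_ring"
  assumes "poly_supported (dominated_by B s) g"
  shows "poly_supported (dominated_by B (s(i := Suc (s i)))) (delta i g)"
proof -
  let ?B' = "dominated_by B (s(i := Suc (s i)))"
  obtain c where c: "\<forall>e. c e \<noteq> 0 \<longrightarrow> e \<in> dominated_by B s \<inter> reduced_exps CARD('p)"
    and g: "g = peval c"
    using assms unfolding poly_supported_def by blast
  have "delta i g = (\<lambda>x. \<Sum>e\<in>reduced_exps CARD('p). c e * delta i (monom_eval e) x)"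
    by (simp add: fun_eq_iff g delta_def peval_def right_diff_distrib sum_subtractf)
  moreover have "poly_supported ?B' (\<lambda>x. c e * delta i (monom_eval e) x)" for e
  proof (cases "c e = 0")
    case False
    with c have e: "e \<in> dominated_by B s" "e \<in> reduced_exps CARD('p)" by auto
    show ?thesis
      unfolding delta_monom_eval
    proof (intro poly_supported_cmult poly_supported_sum poly_supported_monom_eval)
      fix k assume "k \<in> {..<e i}"
      with e show "e(i := k) \<in> ?B'" "e(i := k) \<in> reduced_exps CARD('p)"
        by (auto simp: reduced_exps_def fun_upd_in_dominated_by dest: less_trans)
    qed simp
  qed (simp add: poly_supported_0)
  ultimately show ?thesis
    by (simp add: poly_supported_sum finite_reduced_exps)
qed

lemma poly_supported_delta_funpow:
  "poly_supported (dominated_by B s) g \<Longrightarrow>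
    poly_supported (dominated_by B (s(i := s i + m))) ((delta i ^^ m) g)"
proof (induction m)
  case (Suc m)
  have "(s(i := s i + m))(i := Suc ((s(i := s i + m)) i)) = s(i := s i + Suc m)"
    by simp
  with poly_supported_delta[OF Suc.IH[OF Suc.prems], of i] show ?case
    by (simp only: funpow.simps comp_apply)
qed simp

lemma texp_Cons: "texp (i # is) (m # ms) j = (if i = j then m else 0) + texp is ms j"
  unfolding texp_def by (simp only: length_Cons sum.lessThan_Suc_shift nth_Cons_0 nth_Cons_Suc)

lemma sum_texp:
  "length ms = length is \<Longrightarrow> sum (texp is ms) (UNIV :: 'n::finite set) = sum_list ms"
proof (induction ms "is" rule: list_induct2)
  case (Cons m ms i "is")
  then show ?case
    by (simp add: texp_Cons sum.distrib)
qed (simp add: texp_def)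

lemma poly_supported_ft:
  "length ms = length is \<Longrightarrow> poly_supported (dominated_by B s) g \<Longrightarrow>
    poly_supported (dominated_by B (\<lambda>j. s j + texp is ms j)) (ft is ms g)"
proof (induction ms "is" rule: list_induct2)
  case Nil
  then show ?case by (simp add: texp_def ft_def)
next
  case (Cons m ms i "is")
  have "(\<lambda>j. s j + texp is ms j)(i := s i + texp is ms i + m) = (\<lambda>j. s j + texp (i # is) (m # ms) j)"
    by (simp add: fun_eq_iff texp_Cons)
  with poly_supported_delta_funpow[OF Cons.IH[OF Cons.prems], of i m] show ?case
    by (simp add: ft_def)
qed


section \<open>Every function is a unique reduced polynomial\<close>

lemma power_card_minus_one:
  "(z :: 'p::prime_card mod_ring) ^ (CARD('p) - 1) = (if z = 0 then 0 else 1)"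
proof (cases "z = 0")
  case False
  have "z * z ^ (CARD('p) - 1) = z ^ CARD('p)"
    using nontriv[where 'a='p] by (simp flip: power_Suc)
  also have "\<dots> = z * 1"
    using finite_field_power_card_eq_same[of z] by simp
  finally show ?thesis
    using False by simp
qed (use nontriv[where 'a='p] in simp)

lemma one_minus_power_expansion:
  fixes b :: "'p::prime_card mod_ring"
  shows "\<exists>w. \<forall>y. 1 - (y - b) ^ (CARD('p) - 1) = (\<Sum>k<CARD('p). w k * y ^ k)"
proof (intro exI allI)
  fix y :: "'p mod_ring"
  let ?p = "CARD('p)"
  have atMost: "{..?p - 1} = {..<?p}"
    using nontriv[where 'a='p] by auto
  have "(y - b) ^ (?p - 1) = (y + - b) ^ (?p - 1)"
    by simp
  also have "\<dots> = (\<Sum>k\<le>?p - 1. of_nat (?p - 1 choose k) * y ^ k * (- b) ^ (?p - 1 - k))"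
    by (rule binomial_ring)
  also have "\<dots> = (\<Sum>k<?p. of_nat (?p - 1 choose k) * (- b) ^ (?p - 1 - k) * y ^ k)"
    unfolding atMost by (simp add: mult_ac)
  finally have "(y - b) ^ (?p - 1) = (\<Sum>k<?p. of_nat (?p - 1 choose k) * (- b) ^ (?p - 1 - k) * y ^ k)" .
  moreover have "(\<Sum>k<?p. (if k = 0 then 1 else 0) * y ^ k) = 1"
  proof -
    have eq: "(\<lambda>k. (if k = 0 then 1 else 0) * y ^ k) = (\<lambda>k. if k = 0 then 1 else 0)"
      by auto
    show ?thesis
      unfolding eq using nontriv[where 'a='p] by simp
  qed
  ultimately show "1 - (y - b) ^ (?p - 1) =
    (\<Sum>k<?p. ((if k = 0 then 1 else 0) - of_nat (?p - 1 choose k) * (- b) ^ (?p - 1 - k)) * y ^ k)"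
    by (simp add: left_diff_distrib sum_subtractf)
qed

lemma poly_supported_point_indicator:
  fixes a :: "'n::finite \<Rightarrow> 'p::prime_card mod_ring"
  shows "poly_supported UNIV (\<lambda>x. if x = a then 1 else 0)"
proof -
  let ?p = "CARD('p)"
  have "\<forall>j. \<exists>w. \<forall>y. 1 - (y - a j) ^ (?p - 1) = (\<Sum>k<?p. w k * y ^ k)"
    using one_minus_power_expansion by blast
  then obtain W where W: "\<And>j y. 1 - (y - a j) ^ (?p - 1) = (\<Sum>k<?p. W j k * y ^ k)"
    by (metis choice)
  define c where "c e = (if e \<in> reduced_exps ?p then \<Prod>j\<in>UNIV. W j (e j) else 0)" for e :: "'n \<Rightarrow> nat"
  have "(if x = a then 1 else 0) = peval c x" for x
  proof -
    have "(if x = a then 1 else 0) = (\<Prod>j\<in>UNIV. if x j = a j then 1 else 0 :: 'p mod_ring)"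
    proof (cases "x = a")
      case False
      then obtain j where "x j \<noteq> a j"
        by auto
      then show ?thesis
        using False by (auto intro!: prod_zero[symmetric])
    qed simp
    also have "\<dots> = (\<Prod>j\<in>UNIV. 1 - (x j - a j) ^ (?p - 1))"
      by (intro prod.cong refl) (simp only: power_card_minus_one, simp)
    also have "\<dots> = (\<Prod>j\<in>UNIV. \<Sum>k<?p. W j k * x j ^ k)"
      by (simp only: W)
    also have "\<dots> = (\<Sum>e\<in>PiE UNIV (\<lambda>_. {..<?p}). \<Prod>j\<in>UNIV. W j (e j) * x j ^ e j)"
      by (rule prod_sum_PiE) auto
    also have "\<dots> = peval c x"
      unfolding peval_def reduced_exps_eq_PiE[symmetric]
      by (intro sum.cong refl) (simp add: c_def monom_eval_def prod.distrib)
    finally show ?thesis .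
  qed
  then show ?thesis
    unfolding poly_supported_def by (intro exI[of _ c]) (auto simp: c_def)
qed

lemma poly_supported_UNIV: "poly_supported UNIV (f :: ('n::finite \<Rightarrow> 'p::prime_card mod_ring) \<Rightarrow> 'p mod_ring)"
proof -
  have f: "f = (\<lambda>x. \<Sum>a\<in>UNIV. f a * (if x = a then 1 else 0))"
  proof
    fix x
    have eq: "(\<lambda>a. f a * (if x = a then 1 else 0)) = (\<lambda>a. if x = a then f x else 0)"
      by auto
    show "f x = (\<Sum>a\<in>UNIV. f a * (if x = a then 1 else 0))"
      unfolding eq by simp
  qed
  show ?thesis
    by (subst f) (intro poly_supported_sum poly_supported_cmult poly_supported_point_indicator, auto)
qed

definition reduced_coeffs :: "(('n::finite \<Rightarrow> nat) \<Rightarrow> 'p::prime_card mod_ring) set" where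
  "reduced_coeffs = {c. \<forall>e. e \<notin> reduced_exps CARD('p) \<longrightarrow> c e = 0}"

lemma peval_image_reduced_coeffs:
  "(peval :: _ \<Rightarrow> ('n::finite \<Rightarrow> 'p::prime_card mod_ring) \<Rightarrow> _) ` reduced_coeffs = UNIV"
  using poly_supported_UNIV unfolding poly_supported_def reduced_coeffs_def by blast

lemma reduced_coeffs_eq_image_PiE:
  "(reduced_coeffs :: (('n::finite \<Rightarrow> nat) \<Rightarrow> 'p::prime_card mod_ring) set) =
    (\<lambda>h e. if e \<in> reduced_exps CARD('p) then h e else 0) ` PiE (reduced_exps CARD('p)) (\<lambda>_. UNIV)"
proof (intro equalityI subsetI)
  fix c :: "('n \<Rightarrow> nat) \<Rightarrow> 'p mod_ring"
  assume "c \<in> reduced_coeffs"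
  then show "c \<in> (\<lambda>h e. if e \<in> reduced_exps CARD('p) then h e else 0) ` PiE (reduced_exps CARD('p)) (\<lambda>_. UNIV)"
    unfolding reduced_coeffs_def
    by (intro image_eqI[where x="restrict c (reduced_exps CARD('p))"]) (auto simp: fun_eq_iff)
qed (auto simp: reduced_coeffs_def)

lemma card_reduced_coeffs:
  "card (reduced_coeffs :: (('n::finite \<Rightarrow> nat) \<Rightarrow> 'p::prime_card mod_ring) set) =
    CARD('p) ^ (CARD('p) ^ CARD('n))"
proof -
  have "inj_on (\<lambda>h e. if e \<in> reduced_exps CARD('p) then h e else (0 :: 'p mod_ring))
      (PiE (reduced_exps CARD('p) :: ('n \<Rightarrow> nat) set) (\<lambda>_. UNIV))"
    by (rule inj_onI) (metis (mono_tags, lifting) PiE_ext)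
  then show ?thesis
    unfolding reduced_coeffs_eq_image_PiE
    by (simp add: card_image card_PiE finite_reduced_exps card_reduced_exps)
qed

lemma inj_on_peval_reduced_coeffs:
  "inj_on (peval :: _ \<Rightarrow> ('n::finite \<Rightarrow> 'p::prime_card mod_ring) \<Rightarrow> _) reduced_coeffs"
proof (rule eq_card_imp_inj_on)
  show "finite (reduced_coeffs :: (('n \<Rightarrow> nat) \<Rightarrow> 'p mod_ring) set)"
    unfolding reduced_coeffs_eq_image_PiE by (intro finite_imageI finite_PiE finite_reduced_exps) auto
  show "card ((peval :: _ \<Rightarrow> ('n \<Rightarrow> 'p mod_ring) \<Rightarrow> _) ` reduced_coeffs) =
      card (reduced_coeffs :: (('n \<Rightarrow> nat) \<Rightarrow> 'p mod_ring) set)"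
    by (simp add: peval_image_reduced_coeffs card_reduced_coeffs card_fun)
qed

lemma coeffs_eqI:
  fixes f :: "('n::finite \<Rightarrow> 'p::prime_card mod_ring) \<Rightarrow> 'p mod_ring"
  assumes "\<forall>e. e \<notin> reduced_exps CARD('p) \<longrightarrow> c e = 0" and "\<forall>x. f x = peval c x"
  shows "coeffs f = c"
  unfolding coeffs_def
proof (rule the_equality)
  fix d assume d: "(\<forall>e. e \<notin> reduced_exps CARD('p) \<longrightarrow> d e = 0) \<and> (\<forall>x. f x = peval d x)"
  with assms have "peval d = peval c" "d \<in> reduced_coeffs" "c \<in> reduced_coeffs"
    unfolding reduced_coeffs_def by auto
  then show "d = c"
    using inj_on_peval_reduced_coeffs by (blast dest: inj_onD)
qed (use assms in blast)

lemma coeffs_poly_supported: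
  fixes g :: "('n::finite \<Rightarrow> 'p::prime_card mod_ring) \<Rightarrow> 'p mod_ring"
  assumes "poly_supported B g" "coeffs g e \<noteq> 0"
  shows "e \<in> B \<inter> reduced_exps CARD('p)"
proof -
  obtain c where "\<forall>e. c e \<noteq> 0 \<longrightarrow> e \<in> B \<inter> reduced_exps CARD('p)" "g = peval c"
    using assms(1) unfolding poly_supported_def by blast
  moreover from this have "coeffs g = c"
    by (intro coeffs_eqI) auto
  ultimately show ?thesis
    using assms(2) by auto
qed

lemma coeffs_reduced:
  fixes f :: "('n::finite \<Rightarrow> 'p::prime_card mod_ring) \<Rightarrow> 'p mod_ring"
  shows "coeffs f e \<noteq> 0 \<Longrightarrow> e \<in> reduced_exps CARD('p)"
  using coeffs_poly_supported[OF poly_supported_UNIV] by blast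

lemma peval_coeffs: "peval (coeffs f) = (f :: ('n::finite \<Rightarrow> 'p::prime_card mod_ring) \<Rightarrow> 'p mod_ring)"
proof -
  obtain c where "\<forall>e. c e \<noteq> 0 \<longrightarrow> e \<in> reduced_exps CARD('p)" "f = peval c"
    using poly_supported_UNIV[of f] unfolding poly_supported_def by blast
  moreover from this have "coeffs f = c"
    by (intro coeffs_eqI) auto
  ultimately show ?thesis by simp
qed


lemma finite_coeff_degrees:
  fixes h :: "('n::finite \<Rightarrow> 'p::prime_card mod_ring) \<Rightarrow> 'p mod_ring"
  shows "finite {sum e UNIV | e. coeffs h e \<noteq> 0}"
proof (rule finite_subset[OF _ finite_imageI[OF finite_reduced_exps]])
  show "{sum e UNIV | e. coeffs h e \<noteq> 0} \<subseteq>
      (\<lambda>e. sum e UNIV) ` (reduced_exps CARD('p) :: ('n \<Rightarrow> nat) set)"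
    using coeffs_reduced[of h] by blast
qed

lemma sum_le_pdeg:
  fixes h :: "('n::finite \<Rightarrow> 'p::prime_card mod_ring) \<Rightarrow> 'p mod_ring"
  assumes "coeffs h e \<noteq> 0"
  shows "int (sum e UNIV) \<le> pdeg h"
proof -
  have "sum e UNIV \<le> Max {sum e UNIV | e. coeffs h e \<noteq> 0}"
    using assms by (intro Max_ge finite_coeff_degrees) blast
  moreover have "pdeg h = int (Max {sum e UNIV | e. coeffs h e \<noteq> 0})"
    using assms unfolding pdeg_def by auto
  ultimately show ?thesis
    by (simp only: of_nat_le_iff)
qed

lemma pdeg_leI:
  fixes h :: "('n::finite \<Rightarrow> 'p::prime_card mod_ring) \<Rightarrow> 'p mod_ring"
  assumes "\<And>e. coeffs h e \<noteq> 0 \<Longrightarrow> int (sum e UNIV) \<le> b" and "-1 \<le> b"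
  shows "pdeg h \<le> b"
proof (cases "\<forall>e. coeffs h e = 0")
  case False
  then have "Max {sum e UNIV | e. coeffs h e \<noteq> 0} \<in> {sum e UNIV | e. coeffs h e \<noteq> 0}"
    by (intro Max_in finite_coeff_degrees) auto
  with False assms(1) show ?thesis
    unfolding pdeg_def by auto
qed (use assms(2) in \<open>simp add: pdeg_def\<close>)

lemma coeffs_fS:
  fixes f :: "('n::finite \<Rightarrow> 'p::prime_card mod_ring) \<Rightarrow> 'p mod_ring"
  shows "coeffs (fS is ms f) =
    (\<lambda>e. if e \<in> reduced_exps CARD('p) then coeffs f (\<lambda>j. e j + texp is ms j) else 0)"
    (is "_ = ?c")
proof (rule coeffs_eqI)
  let ?R = "reduced_exps CARD('p) :: ('n \<Rightarrow> nat) set"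
  let ?t = "texp is ms"
  show "\<forall>x. fS is ms f x = peval ?c x"
  proof
    fix x
    have "fS is ms f x = (\<Sum>d\<in>{d\<in>?R. \<forall>j. ?t j \<le> d j}. coeffs f d * monom_eval (\<lambda>j. d j - ?t j) x)"
      unfolding fS_def by (simp add: sum.inter_filter finite_reduced_exps)
    also have "\<dots> = (\<Sum>e\<in>{e\<in>?R. (\<lambda>j. e j + ?t j) \<in> ?R}. coeffs f (\<lambda>j. e j + ?t j) * monom_eval e x)"
      by (rule sum.reindex_bij_witness[where i="\<lambda>e j. e j + ?t j" and j="\<lambda>d j. d j - ?t j"])
        (auto simp: fun_eq_iff reduced_exps_def intro: le_less_trans[OF diff_le_self])
    also have "\<dots> = (\<Sum>e\<in>?R. ?c e * monom_eval e x)"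
      using coeffs_reduced[of f]
      by (intro sum.mono_neutral_cong_left finite_reduced_exps) auto
    finally show "fS is ms f x = peval ?c x"
      unfolding peval_def .
  qed
qed simp


lemma coeffs_ft_dominated:
  fixes f :: "('n::finite \<Rightarrow> 'p::prime_card mod_ring) \<Rightarrow> 'p mod_ring"
  assumes "length ms = length is" "coeffs (ft is ms f) e \<noteq> 0"
  obtains d where "coeffs f d \<noteq> 0" "\<forall>j. e j + texp is ms j \<le> d j"
proof -
  let ?B = "{d. coeffs f d \<noteq> 0}"
  have "poly_supported (dominated_by ?B (\<lambda>_. 0)) f"
    unfolding poly_supported_def dominated_by_def
    using peval_coeffs[of f] coeffs_reduced[of f] by (intro exI[of _ "coeffs f"]) auto
  then have "poly_supported (dominated_by ?B (\<lambda>j. 0 + texp is ms j)) (ft is ms f)"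
    by (rule poly_supported_ft[OF assms(1)])
  from coeffs_poly_supported[OF this assms(2)] show ?thesis
    using that unfolding dominated_by_def by auto
qed

lemma pdeg_ft_le_pdeg_fS:
  fixes f :: "('n::finite \<Rightarrow> 'p::prime_card mod_ring) \<Rightarrow> 'p mod_ring"
  assumes "length ms = length is"
  shows "pdeg (ft is ms f) \<le> pdeg (fS is ms f)"
proof (rule pdeg_leI)
  fix e assume "coeffs (ft is ms f) e \<noteq> 0"
  then obtain d where d: "coeffs f d \<noteq> 0" "\<forall>j. e j + texp is ms j \<le> d j"
    using coeffs_ft_dominated[OF assms] by blast
  define e' where "e' j = d j - texp is ms j" for j
  have t_le: "texp is ms j \<le> d j" for j
    using d(2) add_leD2 by blast
  then have "(\<lambda>j. e' j + texp is ms j) = d" "e' \<in> reduced_exps CARD('p)"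
    using coeffs_reduced[OF d(1)]
    by (auto simp: e'_def fun_eq_iff reduced_exps_def intro: le_less_trans[OF diff_le_self])
  then have "int (sum e' UNIV) \<le> pdeg (fS is ms f)"
    using d(1) by (intro sum_le_pdeg) (simp add: coeffs_fS)
  moreover have "sum e UNIV \<le> sum e' UNIV"
    using d(2) t_le by (intro sum_mono) (simp add: e'_def le_diff_conv2)
  ultimately show "int (sum e UNIV) \<le> pdeg (fS is ms f)"
    by linarith
qed (simp add: pdeg_def)

lemma pdeg_ft_le_pdeg_minus_sum_list:
  fixes f :: "('n::finite \<Rightarrow> 'p::prime_card mod_ring) \<Rightarrow> 'p mod_ring"
  assumes "length ms = length is"
  shows "pdeg (ft is ms f) \<le> max (-1) (pdeg f - int (sum_list ms))"
proof (rule pdeg_leI)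
  fix e assume "coeffs (ft is ms f) e \<noteq> 0"
  then obtain d where d: "coeffs f d \<noteq> 0" "\<forall>j. e j + texp is ms j \<le> d j"
    using coeffs_ft_dominated[OF assms] by blast
  have "sum e UNIV + sum_list ms \<le> sum d UNIV"
    using d(2) by (simp add: sum_texp[OF assms, symmetric] flip: sum.distrib) (rule sum_mono, auto)
  with sum_le_pdeg[OF d(1)] show "int (sum e UNIV) \<le> max (-1) (pdeg f - int (sum_list ms))"
    by linarith
qed simp

text \<open>Neither the distinctness of the indices nor the bounds on the exponents are needed.\<close>
theorem mainTheorem8:
  fixes f :: "('n::finite \<Rightarrow> 'p::prime_card mod_ring) \<Rightarrow> 'p mod_ring"
    and "is" :: "'n list" and ms :: "nat list"
  assumes "distinct is"
    and "length ms = length is"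
    and "\<forall>m\<in>set ms. 1 \<le> m \<and> m \<le> CARD('p) - 1"
  shows "pdeg (ft is ms f) \<le> pdeg (fS is ms f)
         \<and> (int (sum_list ms) = pdeg f - 1 \<longrightarrow> pdeg (ft is ms f) \<le> 1)"
  using pdeg_ft_le_pdeg_fS[OF assms(2)] pdeg_ft_le_pdeg_minus_sum_list[OF assms(2), of f] by auto

end
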